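(* Fix a stage $t<\ell$ and a sub-stage $i\in\{1,2\}$ at stage $t$, with $\Omega_1=\mathcal S\times\mathcal H_{1,t}$ and $\Omega_2=\mathcal S\times\mathcal H_{1,t}\times\mathcal A_1$. For each player-1 continuation policy $\pi_1$ from sub-stage $(i,t)$, let $\Gamma_2^{\pi_1}\subset\mathbb R^{\Omega_i}$ be the finite set of value vectors $\alpha^{\pi_1,\kappa}$ over all deterministic player-2 continuation trees $\kappa$, and let $\Gamma_1=\{\Gamma_2^{\pi_1}:\pi_1\}$ be the family of these sets (representing the player-1 continuations). Then for every sequential occupancy state $x_i$ at sub-stage $(i,t)$, \[ v^*_{\mathrm{seq}}(x_i)=\max_{\Gamma_2\in\Gamma_1}\mathtt{Val}_{\Gamma_2}(x_i),\qquad \mathtt{Val}_{\Gamma_2}(x_i)=\sum_{h_2\in\mathcal H_{2,t}}\min_{\alpha\in\Gamma_2}\langle b_{h_2},\alpha\rangle . \]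
   Context: A finite-horizon two-player zero-sum partially observable stochastic game consists of finite sets $\mathcal S,\mathcal A_1,\mathcal A_2,\mathcal Z_1,\mathcal Z_2$, a kernel $p(s',z_1,z_2\mid s,a_1,a_2)$, reward $r(s,a_1,a_2)$ to player 1 (maximiser) paid by player 2 (minimiser), initial $b\in\Delta(\mathcal S)$, discount $\gamma\in[0,1)$, horizon $\ell$. Player $i$'s private history at stage $t$ is $h_{i,t}=(a_{i,0},z_{i,1},\dots,a_{i,t-1},z_{i,t})\in\mathcal H_{i,t}$; $h\cdot a\cdot z$ denotes appending. Decision rules $d_{i,t}:\mathcal H_{i,t}\to\Delta(\mathcal A_i)$ form $\mathcal D_{i,t}$. Sub-stages $(1,t),(2,t)$ for $t<\ell$, terminal $(1,\ell)$. Sequential occupancy states: $x_{1,t}\in\Delta(\mathcal S\times\mathcal H_{1,t}\times\mathcal H_{2,t})$, $x_{2,t}\in\Delta(\mathcal S\times\mathcal H_{1,t}\times\mathcal H_{2,t}\times\mathcal A_1)$. Transitions/rewards: $\tau_{\mathrm{seq}}(x_{1,t},d_{1,t})(s,h_1,h_2,a_1)=x_{1,t}(s,h_1,h_2)d_{1,t}(a_1\mid h_1)$, $\rho_{\mathrm{seq}}(x_{1,t},d_{1,t})=0$; $\tau_{\mathrm{seq}}(x_{2,t},d_{2,t})(s',h_1\cdot a_1\cdot z_1,h_2\cdot a_2\cdot z_2)=\sum_s x_{2,t}(s,h_1,h_2,a_1)d_{2,t}(a_2\mid h_2)p(s',z_1,z_2\mid s,a_1,a_2)$, $\rho_{\mathrm{seq}}(x_{2,t},d_{2,t})=\sum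 x_{2,t}(s,h_1,h_2,a_1)d_{2,t}(a_2\mid h_2)r(s,a_1,a_2)$. The optimal sequential value $v^*_{\mathrm{seq}}$ is defined by backward recursion: $v^*_{\mathrm{seq}}(x_{1,\ell})=0$, $v^*_{\mathrm{seq}}(x_{2,t})=\min_{d_{2,t}}[\rho_{\mathrm{seq}}(x_{2,t},d_{2,t})+\gamma v^*_{\mathrm{seq}}(\tau_{\mathrm{seq}}(x_{2,t},d_{2,t}))]$, $v^*_{\mathrm{seq}}(x_{1,t})=\max_{d_{1,t}}v^*_{\mathrm{seq}}(\tau_{\mathrm{seq}}(x_{1,t},d_{1,t}))$. Local beliefs: for an occupancy $x_i$ at $(i,t)$ and $h_2\in\mathcal H_{2,t}$, $b_{h_2}\in\mathbb R_+^{\Omega_i}$ is the unnormalised slice $b_{h_2}(\omega)=x_i(\omega,h_2)$. A player-1 continuation policy from $(1,t)$ is a sequence $(d_{1,t},\dots,d_{1,\ell-1})$ and from $(2,t)$ is $(d_{1,t+1},\dots,d_{1,\ell-1})$. A deterministic player-2 continuation tree $\kappa$ from stage $t$ assigns an action in $\mathcal A_2$ to each sequence of player-2 actions and observations occurring after stage $t$ (the current history being the root). The value vector $\alpha^{\pi_1,\kappa}\in\mathbb R^{\Omega_i}$ is given by $\alpha^{\pi_1,\kappa}(\omega)=\mathbb E[\sum_{k=t}^{\ell-1}\gamma^{k-t}r(s_k,a_{1,k},a_{2,k})]$ conditional on the current state and player-1 history (and, when $i=2$, player 1's current action $a_{1,t}$) being $\omega$, when player 1 follows $\pi_1$ and player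 2 follows $\kappa$. *)

theory Defs
  imports "HOL-Analysis.Analysis"
begin

text \<open>Game data passed explicitly:
  kernel p s a1 a2 (s', z1, z2) = p(s',z1,z2 | s,a1,a2), reward r s a1 a2, discount g,
  horizon l. Private histories are lists of (action, observation) pairs; appending
  h . a . z is h @ [(a,z)].\<close>

definition hist :: "nat \<Rightarrow> 'x list set" where
  "hist t = {h. length h = t}"

text \<open>Decision rules h \<mapsto> distribution over actions (defined on all histories;
  only the values on stage-t histories matter).\<close>
definition decision_rules :: "('h \<Rightarrow> 'a::finite \<Rightarrow> real) set" where
  "decision_rules = {d. \<forall>h. (\<forall>a. 0 \<le> d h a) \<and> sum (d h) UNIV = 1}"

definition occ1 :: "nat \<Rightarrow> ('s::finite \<times> 'h1 list \<times> 'h2 list \<Rightarrow> real) set" where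
  "occ1 t = {x. (\<forall>w. 0 \<le> x w)
              \<and> (\<forall>s h1 h2. x (s, h1, h2) \<noteq> 0 \<longrightarrow> length h1 = t \<and> length h2 = t)
              \<and> sum x (UNIV \<times> hist t \<times> hist t) = 1}"

definition occ2 :: "nat \<Rightarrow> ('s::finite \<times> 'h1 list \<times> 'h2 list \<times> 'a1::finite \<Rightarrow> real) set" where
  "occ2 t = {x. (\<forall>w. 0 \<le> x w)
              \<and> (\<forall>s h1 h2 a1. x (s, h1, h2, a1) \<noteq> 0 \<longrightarrow> length h1 = t \<and> length h2 = t)
              \<and> sum x (UNIV \<times> hist t \<times> hist t \<times> UNIV) = 1}"

definition tau1 ::
  "('s \<times> ('a1 \<times> 'z1) list \<times> 'h2 \<Rightarrow> real) \<Rightarrow> (('a1 \<times> 'z1) list \<Rightarrow> 'a1 \<Rightarrow> real)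
   \<Rightarrow> ('s \<times> ('a1 \<times> 'z1) list \<times> 'h2 \<times> 'a1 \<Rightarrow> real)" where
  "tau1 x d = (\<lambda>(s, h1, h2, a1). x (s, h1, h2) * d h1 a1)"

definition tau2 ::
  "('s::finite \<Rightarrow> 'a1 \<Rightarrow> 'a2 \<Rightarrow> 's \<times> 'z1 \<times> 'z2 \<Rightarrow> real)
   \<Rightarrow> ('s \<times> ('a1 \<times> 'z1) list \<times> ('a2 \<times> 'z2) list \<times> 'a1 \<Rightarrow> real)
   \<Rightarrow> (('a2 \<times> 'z2) list \<Rightarrow> 'a2 \<Rightarrow> real)
   \<Rightarrow> ('s \<times> ('a1 \<times> 'z1) list \<times> ('a2 \<times> 'z2) list \<Rightarrow> real)" where
  "tau2 p x d = (\<lambda>(s', h1', h2').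
     if h1' \<noteq> [] \<and> h2' \<noteq> [] then
       (\<Sum>s\<in>UNIV. x (s, butlast h1', butlast h2', fst (last h1'))
                  * d (butlast h2') (fst (last h2'))
                  * p s (fst (last h1')) (fst (last h2')) (s', snd (last h1'), snd (last h2')))
     else 0)"

definition rho2 ::
  "('s::finite \<Rightarrow> 'a1::finite \<Rightarrow> 'a2::finite \<Rightarrow> real) \<Rightarrow> nat
   \<Rightarrow> ('s \<times> ('a1 \<times> 'z1) list \<times> ('a2 \<times> 'z2) list \<times> 'a1 \<Rightarrow> real)
   \<Rightarrow> (('a2 \<times> 'z2) list \<Rightarrow> 'a2 \<Rightarrow> real) \<Rightarrow> real" where
  "rho2 r t x d = (\<Sum>(s, h1, h2, a1) \<in> UNIV \<times> hist t \<times> hist t \<times> UNIV.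
                     \<Sum>a2\<in>UNIV. x (s, h1, h2, a1) * d h2 a2 * r s a1 a2)"

text \<open>V1 p r g n t x: optimal sequential value of occupancy x at sub-stage (1,t)
  with n stages remaining (n = l - t). Max/min over decision rules rendered as SUP/INF.\<close>
primrec V1 ::
  "('s::finite \<Rightarrow> 'a1::finite \<Rightarrow> 'a2::finite \<Rightarrow> 's \<times> 'z1 \<times> 'z2 \<Rightarrow> real)
   \<Rightarrow> ('s \<Rightarrow> 'a1 \<Rightarrow> 'a2 \<Rightarrow> real) \<Rightarrow> real \<Rightarrow> nat \<Rightarrow> nat
   \<Rightarrow> ('s \<times> ('a1 \<times> 'z1) list \<times> ('a2 \<times> 'z2) list \<Rightarrow> real) \<Rightarrow> real" where
  "V1 p r g 0 t x = 0"
| "V1 p r g (Suc n) t x =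
     (SUP d1\<in>decision_rules. INF d2\<in>decision_rules.
        rho2 r t (tau1 x d1) d2 + g * V1 p r g n (Suc t) (tau2 p (tau1 x d1) d2))"

definition vseq1 ::
  "('s::finite \<Rightarrow> 'a1::finite \<Rightarrow> 'a2::finite \<Rightarrow> 's \<times> 'z1 \<times> 'z2 \<Rightarrow> real)
   \<Rightarrow> ('s \<Rightarrow> 'a1 \<Rightarrow> 'a2 \<Rightarrow> real) \<Rightarrow> real \<Rightarrow> nat \<Rightarrow> nat
   \<Rightarrow> ('s \<times> ('a1 \<times> 'z1) list \<times> ('a2 \<times> 'z2) list \<Rightarrow> real) \<Rightarrow> real" where
  "vseq1 p r g l t x = V1 p r g (l - t) t x"

definition vseq2 ::
  "('s::finite \<Rightarrow> 'a1::finite \<Rightarrow> 'a2::finite \<Rightarrow> 's \<times> 'z1 \<times> 'z2 \<Rightarrow> real)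
   \<Rightarrow> ('s \<Rightarrow> 'a1 \<Rightarrow> 'a2 \<Rightarrow> real) \<Rightarrow> real \<Rightarrow> nat \<Rightarrow> nat
   \<Rightarrow> ('s \<times> ('a1 \<times> 'z1) list \<times> ('a2 \<times> 'z2) list \<times> 'a1 \<Rightarrow> real) \<Rightarrow> real" where
  "vseq2 p r g l t x = (INF d2\<in>decision_rules.
        rho2 r t x d2 + g * V1 p r g (l - Suc t) (Suc t) (tau2 p x d2))"

text \<open>Player-1 policies: pol k is the decision rule used at stage k.
  Deterministic player-2 continuation tree kappa: maps the sequence sg of player-2
  (action, observation) pairs occurring after the current stage to an action.
  A1 ... n t s h1 sg: expected discounted reward from sub-stage (1,t) with n stages
  remaining, state s, player-1 history h1, player-2 suffix sg.\<close>
primrec A1 ::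
  "('s::finite \<Rightarrow> 'a1::finite \<Rightarrow> 'a2 \<Rightarrow> 's \<times> 'z1::finite \<times> 'z2::finite \<Rightarrow> real)
   \<Rightarrow> ('s \<Rightarrow> 'a1 \<Rightarrow> 'a2 \<Rightarrow> real) \<Rightarrow> real
   \<Rightarrow> (nat \<Rightarrow> ('a1 \<times> 'z1) list \<Rightarrow> 'a1 \<Rightarrow> real) \<Rightarrow> (('a2 \<times> 'z2) list \<Rightarrow> 'a2)
   \<Rightarrow> nat \<Rightarrow> nat \<Rightarrow> 's \<Rightarrow> ('a1 \<times> 'z1) list \<Rightarrow> ('a2 \<times> 'z2) list \<Rightarrow> real" where
  "A1 p r g pol kappa 0 t s h1 sg = 0"
| "A1 p r g pol kappa (Suc n) t s h1 sg =
     (\<Sum>a1\<in>UNIV. pol t h1 a1 *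
        (r s a1 (kappa sg) + g *
           (\<Sum>ob\<in>UNIV. p s a1 (kappa sg) ob *
              A1 p r g pol kappa n (Suc t) (fst ob) (h1 @ [(a1, fst (snd ob))])
                 (sg @ [(kappa sg, snd (snd ob))]))))"

text \<open>Same, from sub-stage (2,t) after player 1 has played a1 (n stages remaining after t).\<close>
definition A2 ::
  "('s::finite \<Rightarrow> 'a1::finite \<Rightarrow> 'a2 \<Rightarrow> 's \<times> 'z1::finite \<times> 'z2::finite \<Rightarrow> real)
   \<Rightarrow> ('s \<Rightarrow> 'a1 \<Rightarrow> 'a2 \<Rightarrow> real) \<Rightarrow> real
   \<Rightarrow> (nat \<Rightarrow> ('a1 \<times> 'z1) list \<Rightarrow> 'a1 \<Rightarrow> real) \<Rightarrow> (('a2 \<times> 'z2) list \<Rightarrow> 'a2)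
   \<Rightarrow> nat \<Rightarrow> nat \<Rightarrow> 's \<Rightarrow> ('a1 \<times> 'z1) list \<Rightarrow> 'a1 \<Rightarrow> ('a2 \<times> 'z2) list \<Rightarrow> real" where
  "A2 p r g pol kappa n t s h1 a1 sg =
     r s a1 (kappa sg) + g *
       (\<Sum>ob\<in>UNIV. p s a1 (kappa sg) ob *
          A1 p r g pol kappa n (Suc t) (fst ob) (h1 @ [(a1, fst (snd ob))])
             (sg @ [(kappa sg, snd (snd ob))]))"

definition policies1 :: "(nat \<Rightarrow> ('a1 \<times> 'z1) list \<Rightarrow> 'a1::finite \<Rightarrow> real) set" where
  "policies1 = {pol. \<forall>k. pol k \<in> decision_rules}"

definition alpha1 where
  "alpha1 p r g l t pol kappa = (\<lambda>(s, h1). A1 p r g pol kappa (l - t) t s h1 [])"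

definition alpha2 where
  "alpha2 p r g l t pol kappa = (\<lambda>(s, h1, a1). A2 p r g pol kappa (l - Suc t) t s h1 a1 [])"

definition Gamma2_1 where "Gamma2_1 p r g l t pol = range (alpha1 p r g l t pol)"
definition Gamma2_2 where "Gamma2_2 p r g l t pol = range (alpha2 p r g l t pol)"
definition Gamma1_1 where "Gamma1_1 p r g l t = Gamma2_1 p r g l t ` policies1"
definition Gamma1_2 where "Gamma1_2 p r g l t = Gamma2_2 p r g l t ` policies1"

definition Val1 ::
  "nat \<Rightarrow> (('s::finite \<times> 'h1 list) \<Rightarrow> real) set \<Rightarrow> ('s \<times> 'h1 list \<times> 'h2 list \<Rightarrow> real) \<Rightarrow> real" where
  "Val1 t G x = (\<Sum>h2\<in>hist t. Min ((\<lambda>al. \<Sum>(s, h1)\<in>UNIV \<times> hist t. x (s, h1, h2) * al (s, h1)) ` G))"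

definition Val2 ::
  "nat \<Rightarrow> (('s::finite \<times> 'h1 list \<times> 'a1::finite) \<Rightarrow> real) set
   \<Rightarrow> ('s \<times> 'h1 list \<times> 'h2 list \<times> 'a1 \<Rightarrow> real) \<Rightarrow> real" where
  "Val2 t G x = (\<Sum>h2\<in>hist t.
      Min ((\<lambda>al. \<Sum>(s, h1, a1)\<in>UNIV \<times> hist t \<times> UNIV. x (s, h1, h2, a1) * al (s, h1, a1)) ` G))"

end

theory Submission
  imports Defs
begin

(* Backward induction on the number of remaining stages shows that v*_seq is the maximum over
   player-1 policies pol of Val over Gamma2^pol, i.e. of what pol guarantees against a
   best-responding player 2 (policy_value1/2).  At a sub-stage (1,t) the maximising policy
   only has to be changed at stage t.  At a sub-stage (2,t), policy_value2 x pol is a sum over h2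
   of minima over a2 of action values.  Mixing two policies through their realization weights
   (Kuhn) makes continuation values linear, so the action values are concave-like in pol, and a
   minimax lemma for finitely many concave-like functions yields a player-2 decision rule against
   which no policy beats the maximum: min and max can be swapped.  The maxima exist because the
   policy space is compact and policy values are continuous. *)

type_synonym ('a, 'z) policy = "nat \<Rightarrow> ('a \<times> 'z) list \<Rightarrow> 'a \<Rightarrow> real"

section \<open>Minimax for concave-like families\<close>

definition concave_like_on :: "'y set \<Rightarrow> 'i set \<Rightarrow> ('i \<Rightarrow> 'y \<Rightarrow> real) \<Rightarrow> bool" where
  "concave_like_on Y I f \<longleftrightarrow>
     (\<forall>y1\<in>Y. \<forall>y2\<in>Y. \<forall>\<mu>\<in>{0..1}. \<exists>y3\<in>Y. \<forall>i\<in>I. \<mu> * f i y1 + (1 - \<mu>) * f i y2 \<le> f i y3)"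

lemma concave_like_onD:
  assumes "concave_like_on Y I f" "y1 \<in> Y" "y2 \<in> Y" "0 \<le> \<mu>" "\<mu> \<le> 1"
  obtains y3 where "y3 \<in> Y" "\<And>i. i \<in> I \<Longrightarrow> \<mu> * f i y1 + (1 - \<mu>) * f i y2 \<le> f i y3"
  using assms unfolding concave_like_on_def by force

lemma concave_like_on_nonneg_combination:
  assumes "concave_like_on Y I f" and "\<And>k i. k \<in> K \<Longrightarrow> i \<in> I \<Longrightarrow> 0 \<le> w k i"
  shows "concave_like_on Y K (\<lambda>k y. \<Sum>i\<in>I. w k i * f i y)"
  unfolding concave_like_on_def
proof (intro ballI)
  fix y1 y2 \<mu> assume "y1 \<in> Y" "y2 \<in> Y" "\<mu> \<in> {0..1::real}"
  then obtain y3 where "y3 \<in> Y" and y3: "\<And>i. i \<in> I \<Longrightarrow> \<mu> * f i y1 + (1 - \<mu>) * f i y2 \<le> f i y3"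
    using assms(1) by (auto elim: concave_like_onD)
  have "\<mu> * (\<Sum>i\<in>I. w k i * f i y1) + (1 - \<mu>) * (\<Sum>i\<in>I. w k i * f i y2)
        \<le> (\<Sum>i\<in>I. w k i * f i y3)" if "k \<in> K" for k
  proof -
    have "\<mu> * (\<Sum>i\<in>I. w k i * f i y1) + (1 - \<mu>) * (\<Sum>i\<in>I. w k i * f i y2)
        = (\<Sum>i\<in>I. w k i * (\<mu> * f i y1 + (1 - \<mu>) * f i y2))"
      by (simp add: distrib_left sum.distrib sum_distrib_left mult.left_commute)
    also have "\<dots> \<le> (\<Sum>i\<in>I. w k i * f i y3)"
      using y3 assms(2) that by (intro sum_mono mult_left_mono) auto
    finally show ?thesis .
  qed
  with \<open>y3 \<in> Y\<close> show "\<exists>y3\<in>Y. \<forall>k\<in>K. \<mu> * (\<Sum>i\<in>I. w k i * f i y1) + (1 - \<mu>) * (\<Sum>i\<in>I. w k i * f i y2)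
        \<le> (\<Sum>i\<in>I. w k i * f i y3)" by blast
qed

lemma nonneg_if_bounded_on_ray:
  fixes a c \<gamma> :: real
  assumes "\<And>k. 0 \<le> k \<Longrightarrow> a - \<gamma> * k \<le> c"
  shows "0 \<le> \<gamma>"
proof (rule ccontr)
  assume "\<not> 0 \<le> \<gamma>"
  have "a \<le> c" using assms[of 0] by simp
  then have "a - \<gamma> * ((c - a + 1) / - \<gamma>) \<le> c" using \<open>\<not> 0 \<le> \<gamma>\<close> by (intro assms) (simp add: divide_nonneg_neg)
  then show False using \<open>\<not> 0 \<le> \<gamma>\<close> by (simp add: field_simps)
qed

lemma convex_dominated_by_concave_like_pair:
  fixes f :: "bool \<Rightarrow> 'y \<Rightarrow> real"
  assumes "concave_like_on Y UNIV f"
  shows "convex {(a, b). \<exists>y\<in>Y. a \<le> f True y \<and> b \<le> f False y}" (is "convex ?S")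
  unfolding convex_def
proof (intro ballI allI impI)
  fix u w :: "real \<times> real" and \<mu> \<nu> :: real
  assume "u \<in> ?S" "w \<in> ?S" and \<mu>: "0 \<le> \<mu>" "0 \<le> \<nu>" "\<mu> + \<nu> = 1"
  then obtain y1 y2 where y12: "y1 \<in> Y" "y2 \<in> Y" "\<And>b. (if b then fst u else snd u) \<le> f b y1"
    "\<And>b. (if b then fst w else snd w) \<le> f b y2" by fastforce
  have "\<nu> = 1 - \<mu>" using \<mu> by simp
  then obtain y3 where "y3 \<in> Y" and y3: "\<And>b. \<mu> * f b y1 + \<nu> * f b y2 \<le> f b y3"
    using concave_like_onD[OF assms y12(1,2), of \<mu>] \<mu> by auto
  have "\<mu> * (if b then fst u else snd u) + \<nu> * (if b then fst w else snd w) \<le> f b y3" for b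
    using \<mu> by (intro order.trans[OF add_mono[OF mult_left_mono mult_left_mono] y3] y12) auto
  from this[of True] this[of False] \<open>y3 \<in> Y\<close> show "\<mu> *\<^sub>R u + \<nu> *\<^sub>R w \<in> ?S"
    by (auto simp: case_prod_beta)
qed

text \<open>Separate the convex set of points dominated by some \<open>(f True y, f False y)\<close> from the open
  quadrant above \<open>(v, v)\<close>; the normal of the separating line gives the weights.\<close>
lemma concave_like_pair_minimax:
  fixes f :: "bool \<Rightarrow> 'y \<Rightarrow> real"
  assumes conc: "concave_like_on Y UNIV f" and below: "\<forall>y\<in>Y. f True y \<le> v \<or> f False y \<le> v"
  shows "\<exists>\<theta>\<in>{0..1}. \<forall>y\<in>Y. \<theta> * f True y + (1 - \<theta>) * f False y \<le> v"
proof (cases "Y = {}")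
  case False
  then obtain y0 where "y0 \<in> Y" by blast
  define S where "S = {(a, b). \<exists>y\<in>Y. a \<le> f True y \<and> b \<le> f False y}"
  define T where "T = {v<..} \<times> {v<..}"
  have "convex S" unfolding S_def by (rule convex_dominated_by_concave_like_pair[OF conc])
  moreover have "convex T" by (simp add: T_def convex_Times)
  moreover have "S \<inter> T = {}" using below by (fastforce simp: S_def T_def)
  moreover have "(f True y0, f False y0) \<in> S" using \<open>y0 \<in> Y\<close> by (auto simp: S_def)
  moreover have "(v + 1, v + 1) \<in> T" by (simp add: T_def)
  ultimately obtain n c where "n \<noteq> 0" and nS: "\<forall>u\<in>S. n \<bullet> u \<le> c" and nT: "\<forall>u\<in>T. c \<le> n \<bullet> u"
    using separating_hyperplane_sets[of S T] by blast
  obtain \<alpha> \<beta> where n: "n = (\<alpha>, \<beta>)" by fastforce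
  have sep: "\<alpha> * f True y + \<beta> * f False y \<le> c" if "y \<in> Y" for y
    using nS that by (auto simp: S_def n)
  have "0 \<le> \<alpha>"
  proof (rule nonneg_if_bounded_on_ray)
    fix k :: real assume "0 \<le> k"
    then have "(f True y0 - k, f False y0) \<in> S" using \<open>y0 \<in> Y\<close> by (force simp: S_def)
    then show "\<alpha> * f True y0 + \<beta> * f False y0 - \<alpha> * k \<le> c" using nS by (auto simp: n algebra_simps)
  qed
  moreover have "0 \<le> \<beta>"
  proof (rule nonneg_if_bounded_on_ray)
    fix k :: real assume "0 \<le> k"
    then have "(f True y0, f False y0 - k) \<in> S" using \<open>y0 \<in> Y\<close> by (force simp: S_def)
    then show "\<alpha> * f True y0 + \<beta> * f False y0 - \<beta> * k \<le> c" using nS by (auto simp: n algebra_simps)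
  qed
  ultimately have "0 < \<alpha> + \<beta>" using \<open>n \<noteq> 0\<close> by (auto simp: n zero_prod_def)
  have "c \<le> (\<alpha> + \<beta>) * v"
  proof (rule field_le_epsilon)
    fix e :: real assume "0 < e"
    define w where "w = v + e / (\<alpha> + \<beta>)"
    have "c \<le> n \<bullet> (w, w)"
      using nT \<open>0 < e\<close> \<open>0 < \<alpha> + \<beta>\<close> by (simp add: T_def w_def)
    also have "\<dots> = (\<alpha> + \<beta>) * w" by (simp add: n distrib_right)
    also have "\<dots> = (\<alpha> + \<beta>) * v + e"
      using \<open>0 < \<alpha> + \<beta>\<close> by (simp add: w_def distrib_left)
    finally show "c \<le> (\<alpha> + \<beta>) * v + e" .
  qed
  define \<theta> where "\<theta> = \<alpha> / (\<alpha> + \<beta>)"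
  have \<theta>: "(\<alpha> + \<beta>) * \<theta> = \<alpha>" "(\<alpha> + \<beta>) * (1 - \<theta>) = \<beta>"
    using \<open>0 < \<alpha> + \<beta>\<close> by (simp_all add: \<theta>_def right_diff_distrib)
  show ?thesis
  proof (intro bexI ballI)
    fix y assume "y \<in> Y"
    have "(\<alpha> + \<beta>) * (\<theta> * f True y + (1 - \<theta>) * f False y) = \<alpha> * f True y + \<beta> * f False y"
      by (simp only: distrib_left mult.assoc[symmetric] \<theta>)
    also have "\<dots> \<le> (\<alpha> + \<beta>) * v" using sep[OF \<open>y \<in> Y\<close>] \<open>c \<le> (\<alpha> + \<beta>) * v\<close> by simp
    finally show "\<theta> * f True y + (1 - \<theta>) * f False y \<le> v"
      using \<open>0 < \<alpha> + \<beta>\<close> by simp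
  qed (use \<open>0 \<le> \<alpha>\<close> \<open>0 \<le> \<beta>\<close> in \<open>auto simp: \<theta>_def divide_le_eq_1\<close>)
qed (intro bexI[of _ 0]; simp)

lemma concave_like_on_superlevel:
  assumes "concave_like_on Y (insert j I) f"
  shows "concave_like_on {y\<in>Y. v < f j y} I f"
  unfolding concave_like_on_def
proof (intro ballI)
  fix y1 y2 \<mu> assume y12: "y1 \<in> {y\<in>Y. v < f j y}" "y2 \<in> {y\<in>Y. v < f j y}" and \<mu>: "\<mu> \<in> {0..1::real}"
  then obtain y3 where "y3 \<in> Y" and y3: "\<And>i. i \<in> insert j I \<Longrightarrow> \<mu> * f i y1 + (1 - \<mu>) * f i y2 \<le> f i y3"
    using concave_like_onD[OF assms, of y1 y2 \<mu>] by auto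
  have "v = \<mu> * v + (1 - \<mu>) * v" by (simp add: algebra_simps)
  also have "\<dots> < \<mu> * f j y1 + (1 - \<mu>) * f j y2"
    using y12 \<mu> by (cases "\<mu> = 1") (auto intro!: add_le_less_mono mult_left_mono mult_strict_left_mono)
  also have "\<dots> \<le> f j y3" by (rule y3) simp
  finally show "\<exists>y3\<in>{y\<in>Y. v < f j y}. \<forall>i\<in>I. \<mu> * f i y1 + (1 - \<mu>) * f i y2 \<le> f i y3"
    using \<open>y3 \<in> Y\<close> y3 by auto
qed

lemma concave_like_on_pair_combination:
  assumes "concave_like_on Y (insert j I) f" "finite I" "j \<notin> I" "\<forall>i\<in>I. 0 \<le> q i"
  shows "concave_like_on Y UNIV (\<lambda>b y. if b then f j y else \<Sum>i\<in>I. q i * f i y)"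
proof -
  define w where "w = (\<lambda>b i. if b then of_bool (i = j) else of_bool (i \<noteq> j) * q i)"
  have "(\<Sum>i\<in>I. w b i * f i y) = (if b then 0 else \<Sum>i\<in>I. q i * f i y)" for b y
  proof -
    have "w b i = (if b then 0 else q i)" if "i \<in> I" for i using that \<open>j \<notin> I\<close> by (auto simp: w_def)
    then have "(\<Sum>i\<in>I. w b i * f i y) = (\<Sum>i\<in>I. (if b then 0 else q i) * f i y)" by (intro sum.cong) auto
    then show ?thesis by (cases b) simp_all
  qed
  then have "(\<lambda>b y. \<Sum>i\<in>insert j I. w b i * f i y) = (\<lambda>b y. if b then f j y else \<Sum>i\<in>I. q i * f i y)"
    using assms(2,3) by (intro ext) (simp add: w_def)
  moreover have "concave_like_on Y UNIV (\<lambda>b y. \<Sum>i\<in>insert j I. w b i * f i y)"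
    using assms(4) by (intro concave_like_on_nonneg_combination[OF assms(1)]) (auto simp: w_def)
  ultimately show ?thesis by simp
qed

text \<open>Induction on \<open>I\<close>: the other functions are combined on the set where \<open>f j\<close> exceeds \<open>v\<close>, and
  the pair case then trades \<open>f j\<close> off against that combination.\<close>
lemma concave_like_minimax:
  assumes "finite I" "I \<noteq> {}" and "concave_like_on Y I f" and "\<forall>y\<in>Y. \<exists>i\<in>I. f i y \<le> v"
  shows "\<exists>q. (\<forall>i\<in>I. 0 \<le> q i) \<and> sum q I = 1 \<and> (\<forall>y\<in>Y. (\<Sum>i\<in>I. q i * f i y) \<le> v)"
  using assms
proof (induction I arbitrary: Y rule: finite_ne_induct)
  case (singleton j)
  then show ?case by (intro exI[of _ "\<lambda>_. 1"]) auto
next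
  case (insert j I)
  define Y' where "Y' = {y\<in>Y. v < f j y}"
  have "concave_like_on Y' I f" unfolding Y'_def by (rule concave_like_on_superlevel[OF insert.prems(1)])
  moreover have "\<forall>y\<in>Y'. \<exists>i\<in>I. f i y \<le> v" using insert.prems(2) by (force simp: Y'_def)
  ultimately obtain q where q: "\<forall>i\<in>I. 0 \<le> q i" "sum q I = 1" "\<forall>y\<in>Y'. (\<Sum>i\<in>I. q i * f i y) \<le> v"
    using insert.IH by blast
  define F where "F = (\<lambda>b y. if b then f j y else (\<Sum>i\<in>I. q i * f i y))"
  have "concave_like_on Y UNIV F"
    unfolding F_def using insert.prems(1) \<open>finite I\<close> \<open>j \<notin> I\<close> q(1)
    by (rule concave_like_on_pair_combination)
  moreover have "\<forall>y\<in>Y. F True y \<le> v \<or> F False y \<le> v" using q(3) by (auto simp: F_def Y'_def not_less)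
  ultimately obtain \<theta> where \<theta>: "0 \<le> \<theta>" "\<theta> \<le> 1" "\<forall>y\<in>Y. \<theta> * F True y + (1 - \<theta>) * F False y \<le> v"
    using concave_like_pair_minimax[of Y F v] by auto
  define q' where "q' = (\<lambda>i. if i = j then \<theta> else (1 - \<theta>) * q i)"
  have q'_I: "(\<Sum>i\<in>I. q' i * h i) = (1 - \<theta>) * (\<Sum>i\<in>I. q i * h i)" for h :: "_ \<Rightarrow> real"
  proof -
    have "q' i = (1 - \<theta>) * q i" if "i \<in> I" for i using that \<open>j \<notin> I\<close> by (auto simp: q'_def)
    then show ?thesis by (simp add: sum_distrib_left mult.assoc)
  qed
  show ?case
  proof (intro exI[of _ q'] conjI ballI)
    show "0 \<le> q' i" if "i \<in> insert j I" for i using \<theta> q(1) that by (auto simp: q'_def)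
    show "sum q' (insert j I) = 1" using q'_I[of "\<lambda>_. 1"] insert.hyps q(2) by (simp add: q'_def)
    show "(\<Sum>i\<in>insert j I. q' i * f i y) \<le> v" if "y \<in> Y" for y
      using q'_I[of "\<lambda>i. f i y"] insert.hyps \<theta>(3) that by (simp add: q'_def F_def)
  qed
qed


lemma finite_hist [simp]: "finite (hist t :: 'a::finite list set)"
  using finite_lists_length_eq[of "UNIV :: 'a set" t] by (simp add: hist_def)

lemma sum_hist_Suc:
  "(\<Sum>h\<in>hist (Suc t). f h) = (\<Sum>h\<in>hist t. \<Sum>a\<in>UNIV. \<Sum>z\<in>UNIV. f (h @ [(a, z)]))"
proof -
  have "(\<Sum>h\<in>hist (Suc t). f h) = (\<Sum>(h, a, z)\<in>hist t \<times> UNIV \<times> UNIV. f (h @ [(a, z)]))"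
    by (rule sum.reindex_bij_witness[of _ "\<lambda>(h, a, z). h @ [(a, z)]" "\<lambda>h. (butlast h, last h)"])
      (auto simp: hist_def length_Suc_conv_rev)
  then show ?thesis unfolding sum.cartesian_product .
qed

lemma sum_UNIV_triple:
  fixes f :: "'a::finite \<times> 'b::finite \<times> 'c::finite \<Rightarrow> 'd::comm_monoid_add"
  shows "(\<Sum>ob\<in>UNIV. f ob) = (\<Sum>a\<in>UNIV. \<Sum>b\<in>UNIV. \<Sum>c\<in>UNIV. f (a, b, c))"
proof -
  have "(\<Sum>ob\<in>UNIV. f ob) = (\<Sum>ob\<in>UNIV \<times> UNIV \<times> UNIV. f ob)" by simp
  then show ?thesis by (simp add: sum.cartesian_product case_prod_beta)
qed

lemma sum_product_third_outside:
  "(\<Sum>(s, h1, h2, a1)\<in>A \<times> B \<times> C \<times> D. f s h1 h2 a1) = (\<Sum>h2\<in>C. \<Sum>(s, h1, a1)\<in>A \<times> B \<times> D. f s h1 h2 a1)"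
proof -
  have "(\<Sum>(s, h1, h2, a1)\<in>A \<times> B \<times> C \<times> D. f s h1 h2 a1) = (\<Sum>(h2, s, h1, a1)\<in>C \<times> A \<times> B \<times> D. f s h1 h2 a1)"
    by (rule sum.reindex_bij_witness[of _ "\<lambda>(h2, s, h1, a1). (s, h1, h2, a1)" "\<lambda>(s, h1, h2, a1). (h2, s, h1, a1)"])
      auto
  then show ?thesis by (simp add: sum.cartesian_product)
qed

lemma Min_range_mult_left:
  fixes f :: "'k \<Rightarrow> real"
  assumes "finite (range f)" "0 \<le> c"
  shows "Min (range (\<lambda>k. c * f k)) = c * Min (range f)"
  using mono_Min_commute[of "(*) c" "range f"] assms by (simp add: mono_def mult_left_mono image_image)

lemma Min_range_attained: "finite (range f) \<Longrightarrow> \<exists>k. Min (range f) = f k"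
  using Min_in[of "range f"] by (metis empty_not_UNIV image_is_empty rangeE)

lemma Min_le_convex_combination:
  fixes q :: "'a::finite \<Rightarrow> real"
  assumes "\<And>a. 0 \<le> d a" "sum d UNIV = 1"
  shows "Min (range q) \<le> (\<Sum>a\<in>UNIV. d a * q a)"
proof -
  have "Min (range q) = (\<Sum>a\<in>UNIV. d a * Min (range q))"
    using assms(2) by (simp add: sum_distrib_right[symmetric])
  also have "\<dots> \<le> (\<Sum>a\<in>UNIV. d a * q a)"
    using assms(1) by (intro sum_mono mult_left_mono) auto
  finally show ?thesis .
qed

lemma continuous_on_Min_image:
  fixes F :: "'k \<Rightarrow> 'x::topological_space \<Rightarrow> real"
  assumes "finite K" "K \<noteq> {}" "\<And>k. k \<in> K \<Longrightarrow> continuous_on S (F k)"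
  shows "continuous_on S (\<lambda>x. Min ((\<lambda>k. F k x) ` K))"
  using assms
proof (induction K rule: finite_ne_induct)
  case (insert k K)
  then have "continuous_on S (\<lambda>x. min (F k x) (Min ((\<lambda>k. F k x) ` K)))"
    by (intro continuous_on_min) auto
  with insert.hyps show ?case by simp
qed simp


lemma decision_rule_nonneg: "d \<in> decision_rules \<Longrightarrow> 0 \<le> d h a"
  by (simp add: decision_rules_def)

lemma decision_rule_sum: "d \<in> decision_rules \<Longrightarrow> sum (d h) UNIV = 1"
  by (simp add: decision_rules_def)

lemma tau1_nonneg: "(\<forall>w. 0 \<le> x w) \<Longrightarrow> d1 \<in> decision_rules \<Longrightarrow> 0 \<le> tau1 x d1 w"
  by (cases w) (auto simp: tau1_def decision_rule_nonneg)

definition mixed_rule :: "('h \<Rightarrow> 'a) set \<Rightarrow> (('h \<Rightarrow> 'a) \<Rightarrow> real) \<Rightarrow> 'h \<Rightarrow> 'a \<Rightarrow> real" where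
  "mixed_rule C q h a = (\<Sum>c\<in>{c\<in>C. c h = a}. q c)"

lemma sum_mixed_rule:
  fixes F :: "'a::finite \<Rightarrow> real"
  assumes "finite C"
  shows "(\<Sum>a\<in>UNIV. mixed_rule C q h a * F a) = (\<Sum>c\<in>C. q c * F (c h))"
proof -
  have "(\<Sum>a\<in>UNIV. mixed_rule C q h a * F a) = (\<Sum>a\<in>UNIV. \<Sum>c\<in>{c\<in>C. c h = a}. q c * F (c h))"
    by (simp add: mixed_rule_def sum_distrib_right)
  also have "\<dots> = (\<Sum>c\<in>C. q c * F (c h))"
    using assms by (rule sum.group) auto
  finally show ?thesis .
qed

lemma mixed_rule_in_decision_rules:
  assumes "finite C" "\<forall>c\<in>C. 0 \<le> q c" "sum q C = 1"
  shows "mixed_rule C q \<in> decision_rules"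
  using sum_mixed_rule[OF assms(1), of q _ "\<lambda>_. 1"] assms(2,3)
  by (auto simp: decision_rules_def mixed_rule_def intro!: sum_nonneg)

lemma policies1_nonempty: "policies1 \<noteq> {}"
proof -
  have "(\<lambda>_ _ a. of_bool (a = undefined)) \<in> policies1"
    by (simp add: policies1_def decision_rules_def)
  then show ?thesis by blast
qed

lemma policy_nonneg: "pol \<in> policies1 \<Longrightarrow> 0 \<le> pol k h a"
  by (simp add: policies1_def decision_rules_def)

lemma policy_sum: "pol \<in> policies1 \<Longrightarrow> sum (pol k h) UNIV = 1"
  by (simp add: policies1_def decision_rules_def)

lemma continuous_on_policy_entry:
  "continuous_on UNIV (\<lambda>pol :: nat \<Rightarrow> 'h \<Rightarrow> 'a \<Rightarrow> real. pol k h a)"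
  using continuous_on_product_then_coordinatewise[OF
      continuous_on_product_then_coordinatewise[OF continuous_on_product_coordinates[of k]]] .

lemma compact_PiE_UNIV: "compact S \<Longrightarrow> compact (PiE UNIV (\<lambda>_::'i. S))"
  for S :: "'b::topological_space set"
  using compactin_PiE[of "\<lambda>_::'i. euclidean" UNIV "\<lambda>_. S"] by (simp add: euclidean_product_topology)

lemma compact_policies1: "compact (policies1 :: ('a::finite, 'z) policy set)"
proof -
  define B :: "('a, 'z) policy set"
    where "B = PiE UNIV (\<lambda>_. PiE UNIV (\<lambda>_. PiE UNIV (\<lambda>_. {0..1})))"
  have "compact B" unfolding B_def by (intro compact_PiE_UNIV) simp
  moreover have "closed (policies1 :: ('a, 'z) policy set)"
  proof -
    have "policies1 = {pol :: ('a, 'z) policy.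
            \<forall>k h. (\<forall>a. 0 \<le> pol k h a) \<and> sum (pol k h) UNIV = 1}"
      by (auto simp: policies1_def decision_rules_def)
    also have "closed \<dots>"
      by (intro closed_Collect_all closed_Collect_conj closed_Collect_le closed_Collect_eq
          continuous_intros continuous_on_policy_entry)
    finally show ?thesis .
  qed
  moreover have "policies1 \<subseteq> B"
  proof
    fix pol :: "('a, 'z) policy" assume pol: "pol \<in> policies1"
    have "pol k h a \<le> sum (pol k h) UNIV" for k h a
      using pol by (intro member_le_sum) (auto intro: policy_nonneg)
    with pol show "pol \<in> B" by (auto simp: B_def policy_sum policy_nonneg)
  qed
  ultimately show ?thesis using compact_Int_closed[of B policies1] by (simp add: Int_absorb1)
qed

lemma policies1_attains_max:
  fixes F :: "('a::finite, 'z) policy \<Rightarrow> real"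
  assumes "continuous_on UNIV F"
  obtains pol where "pol \<in> policies1" "\<And>pol'. pol' \<in> policies1 \<Longrightarrow> F pol' \<le> F pol"
  using continuous_attains_sup[OF compact_policies1 policies1_nonempty continuous_on_subset[OF assms]]
  by auto


lemma continuous_on_A1: "continuous_on UNIV (\<lambda>pol. A1 p r g pol \<kappa> n k s h1 sg)"
  by (induction n arbitrary: k s h1 sg) (auto intro!: continuous_intros continuous_on_policy_entry)

lemma continuous_on_A2: "continuous_on UNIV (\<lambda>pol. A2 p r g pol \<kappa> n t s h1 a1 sg)"
  unfolding A2_def by (intro continuous_intros continuous_on_A1)

lemma A1_policy_cong:
  "(\<And>j. k \<le> j \<Longrightarrow> pol j = pol' j) \<Longrightarrow> A1 p r g pol \<kappa> n k s h1 sg = A1 p r g pol' \<kappa> n k s h1 sg"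
  by (induction n arbitrary: k s h1 sg) simp_all

lemma A2_policy_cong:
  "(\<And>j. Suc t \<le> j \<Longrightarrow> pol j = pol' j) \<Longrightarrow> A2 p r g pol \<kappa> n t s h1 a1 sg = A2 p r g pol' \<kappa> n t s h1 a1 sg"
  unfolding A2_def by (subst A1_policy_cong[of "Suc t" pol pol']) simp_all

lemma A1_tree_cong:
  "(\<And>e. length e < n \<Longrightarrow> \<kappa> (sg @ e) = \<kappa>' (sg @ e)) \<Longrightarrow>
   A1 p r g pol \<kappa> n k s h1 sg = A1 p r g pol \<kappa>' n k s h1 sg"
proof (induction n arbitrary: k s h1 sg)
  case (Suc n)
  have "\<kappa> sg = \<kappa>' sg" using Suc.prems[of "[]"] by simp
  moreover have "A1 p r g pol \<kappa> n (Suc k) s' h' (sg @ [e]) = A1 p r g pol \<kappa>' n (Suc k) s' h' (sg @ [e])"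
    for s' h' e
    by (rule Suc.IH) (simp add: Suc.prems)
  ultimately show ?case by simp
qed simp

lemma A1_append_tree:
  "A1 p r g pol \<kappa> n k s h1 (pre @ sg) = A1 p r g pol (\<lambda>sg'. \<kappa> (pre @ sg')) n k s h1 sg"
  by (induction n arbitrary: k s h1 sg) simp_all

text \<open>With \<open>n\<close> stages to go only the first \<open>n\<close> levels of a player-2 tree matter; truncating
  makes the relevant trees finitely many, so minima over trees exist.\<close>
definition truncate_tree :: "nat \<Rightarrow> ('b list \<Rightarrow> 'c) \<Rightarrow> 'b list \<Rightarrow> 'c" where
  "truncate_tree n \<kappa> = (\<lambda>e. if length e < n then \<kappa> e else undefined)"

lemma A1_truncate_tree: "A1 p r g pol (truncate_tree n \<kappa>) n k s h1 [] = A1 p r g pol \<kappa> n k s h1 []"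
  by (rule A1_tree_cong) (simp add: truncate_tree_def)

lemma A2_truncate_tree:
  "A2 p r g pol (truncate_tree (Suc n) \<kappa>) n t s h1 a1 [] = A2 p r g pol \<kappa> n t s h1 a1 []"
proof -
  have "A1 p r g pol (truncate_tree (Suc n) \<kappa>) n (Suc t) s' h' [e] = A1 p r g pol \<kappa> n (Suc t) s' h' [e]"
    for s' h' e
    by (rule A1_tree_cong) (simp add: truncate_tree_def)
  then show ?thesis by (simp add: A2_def truncate_tree_def)
qed

lemma finite_range_truncate_tree:
  "finite (range (truncate_tree n :: ('b::finite list \<Rightarrow> 'c::finite) \<Rightarrow> _))"
proof -
  have "{e :: 'b list. length e < n} \<subseteq> {e. set e \<subseteq> UNIV \<and> length e \<le> n}" by auto
  then have "finite {e :: 'b list. length e < n}"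
    by (rule finite_subset) (rule finite_lists_length_le, simp)
  then have "finite (PiE {e :: 'b list. length e < n} (\<lambda>_. UNIV :: 'c set))"
    by (rule finite_PiE) simp
  moreover have "range (truncate_tree n :: ('b list \<Rightarrow> 'c) \<Rightarrow> _) \<subseteq> PiE {e. length e < n} (\<lambda>_. UNIV)"
    by (auto simp: truncate_tree_def PiE_def extensional_def)
  ultimately show ?thesis by (rule finite_subset[rotated])
qed

lemma range_truncation_invariant:
  fixes F :: "('b list \<Rightarrow> 'c) \<Rightarrow> 'd"
  assumes "\<And>\<kappa>. F (truncate_tree n \<kappa>) = F \<kappa>"
  shows "range F = F ` range (truncate_tree n)"
  using assms by (auto simp: image_iff)

lemma finite_range_truncation_invariant:
  fixes F :: "('b::finite list \<Rightarrow> 'c::finite) \<Rightarrow> 'd"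
  assumes "\<And>\<kappa>. F (truncate_tree n \<kappa>) = F \<kappa>"
  shows "finite (range F)"
proof -
  have "range F = F ` range (truncate_tree n)" by (rule range_truncation_invariant) (rule assms)
  then show ?thesis by (simp add: finite_range_truncate_tree)
qed

lemma continuous_on_Min_range_truncation_invariant:
  fixes F :: "('b::finite list \<Rightarrow> 'c::finite) \<Rightarrow> 'x::topological_space \<Rightarrow> real"
  assumes "\<And>\<kappa>. F (truncate_tree n \<kappa>) = F \<kappa>" and "\<And>\<kappa>. continuous_on S (F \<kappa>)"
  shows "continuous_on S (\<lambda>x. Min (range (\<lambda>\<kappa>. F \<kappa> x)))"
proof -
  have "range (\<lambda>\<kappa>. F \<kappa> x) = (\<lambda>\<kappa>. F \<kappa> x) ` range (truncate_tree n)" for x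
    by (rule range_truncation_invariant) (simp add: assms(1))
  then show ?thesis
    by (simp only:) (intro continuous_on_Min_image finite_range_truncate_tree assms(2); simp)
qed


section \<open>Mixing behaviour policies\<close>

definition realization_weight :: "nat \<Rightarrow> ('a, 'z) policy \<Rightarrow> ('a \<times> 'z) list \<Rightarrow> real"
  where "realization_weight t0 pol h = (\<Prod>j\<in>{t0..<length h}. pol j (take j h) (fst (h ! j)))"

text \<open>Kuhn's construction: from stage \<open>t0\<close> on, the mixed policy plays so that its realization weights
  are the \<open>\<theta>\<close>-combination of those of \<open>pol1\<close> and \<open>pol2\<close>; on histories that neither reaches it
  arbitrarily follows \<open>pol1\<close>.\<close>
definition mix_policy :: "nat \<Rightarrow> real \<Rightarrow> ('a, 'z) policy \<Rightarrow> ('a, 'z) policy \<Rightarrow> ('a, 'z) policy" where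
  "mix_policy t0 \<theta> pol1 pol2 = (\<lambda>j h a.
     let w = \<theta> * realization_weight t0 pol1 h + (1 - \<theta>) * realization_weight t0 pol2 h in
     if w = 0 then pol1 j h a
     else (\<theta> * realization_weight t0 pol1 h * pol1 j h a
           + (1 - \<theta>) * realization_weight t0 pol2 h * pol2 j h a) / w)"

lemma realization_weight_start: "length h = t0 \<Longrightarrow> realization_weight t0 pol h = 1"
  by (simp add: realization_weight_def)

lemma realization_weight_snoc:
  assumes "t0 \<le> length h"
  shows "realization_weight t0 pol (h @ [(a, z)]) = realization_weight t0 pol h * pol (length h) h a"
proof -
  have "{t0..<length (h @ [(a, z)])} = insert (length h) {t0..<length h}" using assms by auto
  moreover have "(\<Prod>j\<in>{t0..<length h}. pol j (take j (h @ [(a, z)])) (fst ((h @ [(a, z)]) ! j)))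
      = realization_weight t0 pol h"
    unfolding realization_weight_def by (rule prod.cong) (auto simp: nth_append)
  ultimately show ?thesis by (simp add: realization_weight_def mult.commute)
qed

lemma realization_weight_nonneg: "pol \<in> policies1 \<Longrightarrow> 0 \<le> realization_weight t0 pol h"
  unfolding realization_weight_def by (intro prod_nonneg) (auto intro: policy_nonneg)

context
  fixes pol1 pol2 :: "('a::finite, 'z::finite) policy" and \<theta> :: real
  assumes pol12: "pol1 \<in> policies1" "pol2 \<in> policies1" and \<theta>: "0 \<le> \<theta>" "\<theta> \<le> 1"
begin

lemma mix_policy_weighted:
  "(\<theta> * realization_weight t0 pol1 h + (1 - \<theta>) * realization_weight t0 pol2 h) * mix_policy t0 \<theta> pol1 pol2 j h a
   = \<theta> * realization_weight t0 pol1 h * pol1 j h a + (1 - \<theta>) * realization_weight t0 pol2 h * pol2 j h a"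
proof (cases "\<theta> * realization_weight t0 pol1 h + (1 - \<theta>) * realization_weight t0 pol2 h = 0")
  case True
  moreover have "0 \<le> \<theta> * realization_weight t0 pol1 h" "0 \<le> (1 - \<theta>) * realization_weight t0 pol2 h"
    using \<theta> pol12 by (simp_all add: realization_weight_nonneg)
  ultimately have "\<theta> * realization_weight t0 pol1 h = 0" "(1 - \<theta>) * realization_weight t0 pol2 h = 0"
    by linarith+
  with True show ?thesis by (simp only: mult_zero_left add_0)
qed (simp add: mix_policy_def Let_def)

lemma mix_policy_in_policies1: "mix_policy t0 \<theta> pol1 pol2 \<in> policies1"
  unfolding policies1_def decision_rules_def
proof (intro CollectI allI conjI)
  fix j h
  define w where "w = \<theta> * realization_weight t0 pol1 h + (1 - \<theta>) * realization_weight t0 pol2 h"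
  have w1: "0 \<le> \<theta> * realization_weight t0 pol1 h" and w2: "0 \<le> (1 - \<theta>) * realization_weight t0 pol2 h"
    using \<theta> pol12 by (simp_all add: realization_weight_nonneg)
  show "0 \<le> mix_policy t0 \<theta> pol1 pol2 j h a" for a
    using w1 w2 policy_nonneg[OF pol12(1)] policy_nonneg[OF pol12(2)] unfolding mix_policy_def Let_def
    by (auto intro!: divide_nonneg_nonneg add_nonneg_nonneg mult_nonneg_nonneg)
  show "sum (mix_policy t0 \<theta> pol1 pol2 j h) UNIV = 1"
  proof (cases "w = 0")
    case True
    then show ?thesis using pol12 by (simp add: mix_policy_def Let_def w_def[symmetric] policy_sum)
  next
    case False
    have "w * sum (mix_policy t0 \<theta> pol1 pol2 j h) UNIV = w"
      using pol12 by (simp add: sum_distrib_left mix_policy_weighted[folded w_def] sum.distrib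
          sum_distrib_left[symmetric] policy_sum w_def)
    with False show ?thesis by simp
  qed
qed

lemma A1_mix_policy_weighted:
  assumes "length h1 = k" "t0 \<le> k"
  shows "(\<theta> * realization_weight t0 pol1 h1 + (1 - \<theta>) * realization_weight t0 pol2 h1)
           * A1 p r g (mix_policy t0 \<theta> pol1 pol2) \<kappa> n k s h1 sg
         = \<theta> * realization_weight t0 pol1 h1 * A1 p r g pol1 \<kappa> n k s h1 sg
           + (1 - \<theta>) * realization_weight t0 pol2 h1 * A1 p r g pol2 \<kappa> n k s h1 sg"
  using assms
proof (induction n arbitrary: k s h1 sg)
  case (Suc n)
  define m1 where "m1 = \<theta> * realization_weight t0 pol1 h1"
  define m2 where "m2 = (1 - \<theta>) * realization_weight t0 pol2 h1"
  define pol where "pol = mix_policy t0 \<theta> pol1 pol2"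
  define C where "C = (\<lambda>pol a. r s a (\<kappa> sg) + g * (\<Sum>ob\<in>UNIV. p s a (\<kappa> sg) ob *
      A1 p r g pol \<kappa> n (Suc k) (fst ob) (h1 @ [(a, fst (snd ob))]) (sg @ [(\<kappa> sg, snd (snd ob))])))"
  have weight_snoc: "\<theta> * realization_weight t0 pol1 (h1 @ [(a, z)]) = m1 * pol1 k h1 a"
    "(1 - \<theta>) * realization_weight t0 pol2 (h1 @ [(a, z)]) = m2 * pol2 k h1 a" for a z
    using Suc.prems by (simp_all add: realization_weight_snoc m1_def m2_def)
  have A1_Suc: "A1 p r g q \<kappa> (Suc n) k s h1 sg = (\<Sum>a\<in>UNIV. q k h1 a * C q a)" for q
    by (simp add: C_def)
  have step: "(m1 + m2) * pol k h1 a * C pol a = m1 * pol1 k h1 a * C pol1 a + m2 * pol2 k h1 a * C pol2 a"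
    for a
  proof -
    have "(m1 + m2) * pol k h1 a = m1 * pol1 k h1 a + m2 * pol2 k h1 a"
      unfolding m1_def m2_def pol_def by (rule mix_policy_weighted)
    moreover have "(m1 * pol1 k h1 a + m2 * pol2 k h1 a) * A1 p r g pol \<kappa> n (Suc k) s' (h1 @ [(a, z)]) sg'
        = m1 * pol1 k h1 a * A1 p r g pol1 \<kappa> n (Suc k) s' (h1 @ [(a, z)]) sg'
          + m2 * pol2 k h1 a * A1 p r g pol2 \<kappa> n (Suc k) s' (h1 @ [(a, z)]) sg'" for s' z sg'
      using Suc.IH[of "h1 @ [(a, z)]" "Suc k" s' sg'] Suc.prems by (simp add: weight_snoc pol_def)
    ultimately show ?thesis
      by (simp add: C_def algebra_simps sum_distrib_left sum.distrib)
  qed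
  have "(m1 + m2) * A1 p r g pol \<kappa> (Suc n) k s h1 sg = (\<Sum>a\<in>UNIV. (m1 + m2) * pol k h1 a * C pol a)"
    unfolding A1_Suc by (simp add: sum_distrib_left mult.assoc)
  also have "\<dots> = (\<Sum>a\<in>UNIV. m1 * pol1 k h1 a * C pol1 a + m2 * pol2 k h1 a * C pol2 a)"
    by (simp only: step)
  also have "\<dots> = m1 * A1 p r g pol1 \<kappa> (Suc n) k s h1 sg + m2 * A1 p r g pol2 \<kappa> (Suc n) k s h1 sg"
    unfolding A1_Suc by (simp add: sum.distrib sum_distrib_left mult.assoc)
  finally show ?case by (simp add: m1_def m2_def pol_def)
qed simp

lemma A1_mix_policy:
  "length h1 = k \<Longrightarrow> A1 p r g (mix_policy k \<theta> pol1 pol2) \<kappa> n k s h1 sg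
     = \<theta> * A1 p r g pol1 \<kappa> n k s h1 sg + (1 - \<theta>) * A1 p r g pol2 \<kappa> n k s h1 sg"
  using A1_mix_policy_weighted[of h1 k k] by (simp add: realization_weight_start)

end


section \<open>Optimal values as maxima over policies\<close>

definition maximum_on :: "('p \<Rightarrow> real) \<Rightarrow> 'p set \<Rightarrow> real \<Rightarrow> bool" where
  "maximum_on f P v \<longleftrightarrow> (\<exists>x\<in>P. f x = v) \<and> (\<forall>x\<in>P. f x \<le> v)"

lemma maximum_on_image: "maximum_on f (h ` P) v \<longleftrightarrow> maximum_on (\<lambda>x. f (h x)) P v"
  by (auto simp: maximum_on_def)

locale posg =
  fixes p :: "'s::finite \<Rightarrow> 'a1::finite \<Rightarrow> 'a2::finite \<Rightarrow> 's \<times> 'z1::finite \<times> 'z2::finite \<Rightarrow> real"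
    and r :: "'s \<Rightarrow> 'a1 \<Rightarrow> 'a2 \<Rightarrow> real"
    and g :: real
  assumes p_nonneg: "0 \<le> p s a1 a2 ob"
    and g_nonneg: "0 \<le> g"
begin

text \<open>\<open>belief_value1 n k b pol \<kappa>\<close> is the paper's \<open>\<langle>b, \<alpha>^{pol,\<kappa>}\<rangle>\<close> at sub-stage \<open>(1, k)\<close> with \<open>n\<close>
  stages to go; \<open>belief_value2\<close> is the same at sub-stage \<open>(2, k)\<close>.\<close>
definition belief_value1 ::
  "nat \<Rightarrow> nat \<Rightarrow> ('s \<times> ('a1 \<times> 'z1) list \<Rightarrow> real) \<Rightarrow> ('a1, 'z1) policy
   \<Rightarrow> (('a2 \<times> 'z2) list \<Rightarrow> 'a2) \<Rightarrow> real" where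
  "belief_value1 n k b pol \<kappa> = (\<Sum>(s, h1)\<in>UNIV \<times> hist k. b (s, h1) * A1 p r g pol \<kappa> n k s h1 [])"

definition belief_value2 ::
  "nat \<Rightarrow> nat \<Rightarrow> ('s \<times> ('a1 \<times> 'z1) list \<times> 'a1 \<Rightarrow> real) \<Rightarrow> ('a1, 'z1) policy
   \<Rightarrow> (('a2 \<times> 'z2) list \<Rightarrow> 'a2) \<Rightarrow> real" where
  "belief_value2 n k b pol \<kappa> =
     (\<Sum>(s, h1, a1)\<in>UNIV \<times> hist k \<times> UNIV. b (s, h1, a1) * A2 p r g pol \<kappa> n k s h1 a1 [])"

definition policy_value1 ::
  "nat \<Rightarrow> nat \<Rightarrow> ('s \<times> ('a1 \<times> 'z1) list \<times> ('a2 \<times> 'z2) list \<Rightarrow> real)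
   \<Rightarrow> ('a1, 'z1) policy \<Rightarrow> real" where
  "policy_value1 n t x pol = (\<Sum>h2\<in>hist t. Min (range (belief_value1 n t (\<lambda>(s, h1). x (s, h1, h2)) pol)))"

definition policy_value2 ::
  "nat \<Rightarrow> nat \<Rightarrow> ('s \<times> ('a1 \<times> 'z1) list \<times> ('a2 \<times> 'z2) list \<times> 'a1 \<Rightarrow> real)
   \<Rightarrow> ('a1, 'z1) policy \<Rightarrow> real" where
  "policy_value2 n t x pol =
     (\<Sum>h2\<in>hist t. Min (range (belief_value2 n t (\<lambda>(s, h1, a1). x (s, h1, h2, a1)) pol)))"

definition V2 :: "nat \<Rightarrow> nat \<Rightarrow> ('s \<times> ('a1 \<times> 'z1) list \<times> ('a2 \<times> 'z2) list \<times> 'a1 \<Rightarrow> real) \<Rightarrow> real" where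
  "V2 n t x = (INF d2\<in>decision_rules. rho2 r t x d2 + g * V1 p r g n (Suc t) (tau2 p x d2))"

definition stage_reward ::
  "nat \<Rightarrow> ('s \<times> ('a1 \<times> 'z1) list \<times> ('a2 \<times> 'z2) list \<times> 'a1 \<Rightarrow> real) \<Rightarrow> ('a2 \<times> 'z2) list \<Rightarrow> 'a2 \<Rightarrow> real"
  where "stage_reward t x h2 a2 = (\<Sum>(s, h1, a1)\<in>UNIV \<times> hist t \<times> UNIV. x (s, h1, h2, a1) * r s a1 a2)"

definition next_belief ::
  "('s \<times> ('a1 \<times> 'z1) list \<times> ('a2 \<times> 'z2) list \<times> 'a1 \<Rightarrow> real) \<Rightarrow> ('a2 \<times> 'z2) list \<Rightarrow> 'a2 \<Rightarrow> 'z2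
   \<Rightarrow> 's \<times> ('a1 \<times> 'z1) list \<Rightarrow> real" where
  "next_belief x h2 a2 z2 = (\<lambda>(s', h1'). if h1' = [] then 0 else
     (\<Sum>s\<in>UNIV. x (s, butlast h1', h2, fst (last h1')) * p s (fst (last h1')) a2 (s', snd (last h1'), z2)))"

text \<open>The cost to player 2 of playing \<open>a2\<close> at \<open>h2\<close> and then best-responding to \<open>pol\<close> after each
  observation \<open>z2\<close>.\<close>
definition action_value ::
  "nat \<Rightarrow> nat \<Rightarrow> ('s \<times> ('a1 \<times> 'z1) list \<times> ('a2 \<times> 'z2) list \<times> 'a1 \<Rightarrow> real)
   \<Rightarrow> ('a1, 'z1) policy \<Rightarrow> ('a2 \<times> 'z2) list \<Rightarrow> 'a2 \<Rightarrow> real" where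
  "action_value n t x pol h2 a2 = stage_reward t x h2 a2
     + g * (\<Sum>z2\<in>UNIV. Min (range (belief_value1 n (Suc t) (next_belief x h2 a2 z2) pol)))"

lemma Val1_Gamma2_1: "Val1 t (Gamma2_1 p r g l t pol) x = policy_value1 (l - t) t x pol"
  by (simp add: Val1_def policy_value1_def belief_value1_def Gamma2_1_def alpha1_def image_image)

lemma Val2_Gamma2_2: "Val2 t (Gamma2_2 p r g l t pol) x = policy_value2 (l - Suc t) t x pol"
  by (simp add: Val2_def policy_value2_def belief_value2_def Gamma2_2_def alpha2_def image_image)

lemma V1_Suc_eq_SUP_V2: "V1 p r g (Suc n) t x = (SUP d1\<in>decision_rules. V2 n t (tau1 x d1))"
  by (simp add: V2_def)

lemma finite_range_belief_value1: "finite (range (belief_value1 n k b pol))"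
  by (rule finite_range_truncation_invariant[where n = n]) (simp add: belief_value1_def A1_truncate_tree)

lemma finite_range_belief_value2: "finite (range (belief_value2 n k b pol))"
  by (rule finite_range_truncation_invariant[where n = "Suc n"])
    (simp add: belief_value2_def A2_truncate_tree)

lemma continuous_on_policy_value1: "continuous_on UNIV (policy_value1 n t x)"
proof -
  have "continuous_on UNIV (\<lambda>pol. Min (range (\<lambda>\<kappa>. belief_value1 n t b pol \<kappa>)))" for b
    by (rule continuous_on_Min_range_truncation_invariant[where n = n])
      (auto simp: belief_value1_def A1_truncate_tree case_prod_beta
        intro!: continuous_intros continuous_on_A1)
  then show ?thesis unfolding policy_value1_def by (intro continuous_on_sum) auto
qed

lemma continuous_on_policy_value2: "continuous_on UNIV (policy_value2 n t x)"
proof -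
  have "continuous_on UNIV (\<lambda>pol. Min (range (\<lambda>\<kappa>. belief_value2 n t b pol \<kappa>)))" for b
    by (rule continuous_on_Min_range_truncation_invariant[where n = "Suc n"])
      (auto simp: belief_value2_def A2_truncate_tree case_prod_beta
        intro!: continuous_intros continuous_on_A2)
  then show ?thesis unfolding policy_value2_def by (intro continuous_on_sum) auto
qed

lemma belief_value1_Suc:
  "belief_value1 (Suc n) t b pol \<kappa> = belief_value2 n t (\<lambda>(s, h1, a1). b (s, h1) * pol t h1 a1) pol \<kappa>"
proof -
  have "belief_value2 n t (\<lambda>(s, h1, a1). b (s, h1) * pol t h1 a1) pol \<kappa>
      = (\<Sum>s\<in>UNIV. \<Sum>h1\<in>hist t. \<Sum>a1\<in>UNIV. b (s, h1) * pol t h1 a1 * A2 p r g pol \<kappa> n t s h1 a1 [])"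
    by (simp add: belief_value2_def sum.cartesian_product)
  also have "\<dots> = belief_value1 (Suc n) t b pol \<kappa>"
    by (simp add: belief_value1_def A2_def sum_distrib_left mult.assoc sum.cartesian_product[symmetric])
  finally show ?thesis by simp
qed

lemma policy_value1_Suc: "policy_value1 (Suc n) t x pol = policy_value2 n t (tau1 x (pol t)) pol"
  by (simp add: policy_value1_def policy_value2_def belief_value1_Suc tau1_def)

lemma policy_value2_policy_cong:
  "(\<And>j. Suc t \<le> j \<Longrightarrow> pol j = pol' j) \<Longrightarrow> policy_value2 n t x pol = policy_value2 n t x pol'"
  unfolding policy_value2_def belief_value2_def by (subst A2_policy_cong[of t pol pol']) simp_all

lemma stage_reward_sum_rho2:
  "rho2 r t x d2 = (\<Sum>h2\<in>hist t. \<Sum>a2\<in>UNIV. d2 h2 a2 * stage_reward t x h2 a2)"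
proof -
  have "rho2 r t x d2 = (\<Sum>h2\<in>hist t. \<Sum>(s, h1, a1)\<in>UNIV \<times> hist t \<times> UNIV.
          \<Sum>a2\<in>UNIV. x (s, h1, h2, a1) * d2 h2 a2 * r s a1 a2)"
    unfolding rho2_def by (rule sum_product_third_outside)
  also have "\<dots> = (\<Sum>h2\<in>hist t. \<Sum>a2\<in>UNIV. \<Sum>(s, h1, a1)\<in>UNIV \<times> hist t \<times> UNIV.
          x (s, h1, h2, a1) * d2 h2 a2 * r s a1 a2)"
    by (simp only: case_prod_beta sum.swap[of _ "UNIV \<times> hist t \<times> UNIV"])
  also have "\<dots> = (\<Sum>h2\<in>hist t. \<Sum>a2\<in>UNIV. d2 h2 a2 * stage_reward t x h2 a2)"
    by (simp add: stage_reward_def sum_distrib_left mult_ac case_prod_beta)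
  finally show ?thesis .
qed

lemma tau2_snoc: "tau2 p x d2 (s, h1, h2 @ [(a2, z2)]) = d2 h2 a2 * next_belief x h2 a2 z2 (s, h1)"
  by (simp add: tau2_def next_belief_def sum_distrib_left mult_ac)

lemma belief_value1_scale: "belief_value1 n k (\<lambda>w. c * b w) pol \<kappa> = c * belief_value1 n k b pol \<kappa>"
  by (simp add: belief_value1_def sum_distrib_left mult.assoc case_prod_beta)

lemma policy_value1_tau2:
  assumes "\<And>h a. 0 \<le> d2 h a"
  shows "policy_value1 n (Suc t) (tau2 p x d2) pol = (\<Sum>h2\<in>hist t. \<Sum>a2\<in>UNIV.
           d2 h2 a2 * (\<Sum>z2\<in>UNIV. Min (range (belief_value1 n (Suc t) (next_belief x h2 a2 z2) pol))))"
proof -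
  have "(\<lambda>(s, h1). tau2 p x d2 (s, h1, h2 @ [(a2, z2)])) = (\<lambda>w. d2 h2 a2 * next_belief x h2 a2 z2 w)"
    for h2 a2 z2 by (auto simp: tau2_snoc)
  then have "Min (range (belief_value1 n (Suc t) (\<lambda>(s, h1). tau2 p x d2 (s, h1, h2 @ [(a2, z2)])) pol))
      = d2 h2 a2 * Min (range (belief_value1 n (Suc t) (next_belief x h2 a2 z2) pol))" for h2 a2 z2
    by (simp add: belief_value1_scale Min_range_mult_left finite_range_belief_value1 assms)
  then show ?thesis
    unfolding policy_value1_def sum_hist_Suc by (simp add: sum_distrib_left)
qed

lemma rho2_plus_policy_value1_tau2:
  assumes "\<And>h a. 0 \<le> d2 h a"
  shows "rho2 r t x d2 + g * policy_value1 n (Suc t) (tau2 p x d2) pol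
       = (\<Sum>h2\<in>hist t. \<Sum>a2\<in>UNIV. d2 h2 a2 * action_value n t x pol h2 a2)"
  unfolding stage_reward_sum_rho2 policy_value1_tau2[OF assms] action_value_def
  by (simp add: sum_distrib_left sum.distrib[symmetric] algebra_simps)

lemma tau2_nonneg: "(\<forall>w. 0 \<le> x w) \<Longrightarrow> d2 \<in> decision_rules \<Longrightarrow> 0 \<le> tau2 p x d2 w"
  by (cases w) (auto simp: tau2_def decision_rule_nonneg p_nonneg intro!: sum_nonneg)

lemma belief_value2_first_action:
  "belief_value2 n t (\<lambda>(s, h1, a1). x (s, h1, h2, a1)) pol \<kappa> = stage_reward t x h2 (\<kappa> [])
     + g * (\<Sum>z2\<in>UNIV. belief_value1 n (Suc t) (next_belief x h2 (\<kappa> []) z2) pol (\<lambda>sg. \<kappa> ((\<kappa> [], z2) # sg)))"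
proof -
  define a2 where "a2 = \<kappa> []"
  define B where "B = (\<lambda>z2 s' h'. A1 p r g pol (\<lambda>sg. \<kappa> ((a2, z2) # sg)) n (Suc t) s' h' [])"
  define F where "F = (\<lambda>s h1 a1 s' z1 z2. x (s, h1, h2, a1) * p s a1 a2 (s', z1, z2) * B z2 s' (h1 @ [(a1, z1)]))"
  have A2_first: "A2 p r g pol \<kappa> n t s h1 a1 [] = r s a1 a2 + g * (\<Sum>s'\<in>UNIV. \<Sum>z1\<in>UNIV. \<Sum>z2\<in>UNIV.
      p s a1 a2 (s', z1, z2) * B z2 s' (h1 @ [(a1, z1)]))" for s h1 a1
    using A1_append_tree[of p r g pol \<kappa> n "Suc t" _ _ "[_]" "[]"]
    by (simp add: A2_def sum_UNIV_triple a2_def B_def)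
  have "belief_value2 n t (\<lambda>(s, h1, a1). x (s, h1, h2, a1)) pol \<kappa> = stage_reward t x h2 a2
      + g * (\<Sum>s\<in>UNIV. \<Sum>h1\<in>hist t. \<Sum>a1\<in>UNIV. \<Sum>s'\<in>UNIV. \<Sum>z1\<in>UNIV. \<Sum>z2\<in>UNIV. F s h1 a1 s' z1 z2)"
    by (simp add: belief_value2_def stage_reward_def A2_first F_def sum.cartesian_product[symmetric]
        sum.distrib sum_distrib_left algebra_simps)
  also have "(\<Sum>s\<in>UNIV. \<Sum>h1\<in>hist t. \<Sum>a1\<in>UNIV. \<Sum>s'\<in>UNIV. \<Sum>z1\<in>UNIV. \<Sum>z2\<in>UNIV. F s h1 a1 s' z1 z2)
      = (\<Sum>z2\<in>UNIV. \<Sum>s'\<in>UNIV. \<Sum>h1\<in>hist t. \<Sum>a1\<in>UNIV. \<Sum>z1\<in>UNIV. \<Sum>s\<in>UNIV. F s h1 a1 s' z1 z2)"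
  proof -
    have "(\<Sum>(s, h1, a1, s', z1, z2)\<in>UNIV \<times> hist t \<times> UNIV \<times> UNIV \<times> UNIV \<times> UNIV. F s h1 a1 s' z1 z2)
        = (\<Sum>(z2, s', h1, a1, z1, s)\<in>UNIV \<times> UNIV \<times> hist t \<times> UNIV \<times> UNIV \<times> UNIV. F s h1 a1 s' z1 z2)"
      by (rule sum.reindex_bij_witness[of _ "\<lambda>(z2, s', h1, a1, z1, s). (s, h1, a1, s', z1, z2)"
            "\<lambda>(s, h1, a1, s', z1, z2). (z2, s', h1, a1, z1, s)"]) auto
    then show ?thesis by (simp add: sum.cartesian_product)
  qed
  also have "\<dots> = (\<Sum>z2\<in>UNIV. belief_value1 n (Suc t) (next_belief x h2 a2 z2) pol (\<lambda>sg. \<kappa> ((a2, z2) # sg)))"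
    by (simp add: belief_value1_def next_belief_def sum.cartesian_product[symmetric] sum_hist_Suc
        sum_distrib_right F_def B_def)
  finally show ?thesis by (simp add: a2_def)
qed

text \<open>A best-responding player 2 picks the best first action and, after each observation, the best
  subtree: both choices can be made independently because the tree branches on the observation.\<close>
lemma Min_belief_value2_eq_Min_action_value:
  "Min (range (belief_value2 n t (\<lambda>(s, h1, a1). x (s, h1, h2, a1)) pol)) = Min (range (action_value n t x pol h2))"
proof (rule Min_eqI)
  show "finite (range (belief_value2 n t (\<lambda>(s, h1, a1). x (s, h1, h2, a1)) pol))"
    by (rule finite_range_belief_value2)
  have subtree_le: "Min (range (belief_value1 n (Suc t) (next_belief x h2 a2 z2) pol))
      \<le> belief_value1 n (Suc t) (next_belief x h2 a2 z2) pol \<kappa>" for a2 z2 \<kappa>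
    by (simp add: finite_range_belief_value1)
  show "Min (range (action_value n t x pol h2)) \<le> v"
    if v_in: "v \<in> range (belief_value2 n t (\<lambda>(s, h1, a1). x (s, h1, h2, a1)) pol)" for v
  proof -
    obtain \<kappa> where v: "v = belief_value2 n t (\<lambda>(s, h1, a1). x (s, h1, h2, a1)) pol \<kappa>" using v_in by blast
    have "Min (range (action_value n t x pol h2)) \<le> action_value n t x pol h2 (\<kappa> [])" by simp
    also have "\<dots> \<le> v"
      unfolding v belief_value2_first_action action_value_def
      by (intro add_left_mono mult_left_mono g_nonneg sum_mono subtree_le)
    finally show ?thesis .
  qed
  obtain a2 where a2: "Min (range (action_value n t x pol h2)) = action_value n t x pol h2 a2"
    using Min_range_attained[of "action_value n t x pol h2"] by auto
  obtain K where K: "\<And>z2. Min (range (belief_value1 n (Suc t) (next_belief x h2 a2 z2) pol))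
      = belief_value1 n (Suc t) (next_belief x h2 a2 z2) pol (K z2)"
    using Min_range_attained[OF finite_range_belief_value1, of n "Suc t" "next_belief x h2 a2 _" pol] by metis
  define \<kappa> where "\<kappa> = (\<lambda>sg. case sg of [] \<Rightarrow> a2 | e # sg' \<Rightarrow> K (snd e) sg')"
  have "belief_value2 n t (\<lambda>(s, h1, a1). x (s, h1, h2, a1)) pol \<kappa> = action_value n t x pol h2 a2"
    by (simp add: belief_value2_first_action action_value_def \<kappa>_def K)
  then show "Min (range (action_value n t x pol h2)) \<in> range (belief_value2 n t (\<lambda>(s, h1, a1). x (s, h1, h2, a1)) pol)"
    using a2 by (simp add: image_iff) metis
qed

lemma policy_value2_eq_sum_Min_action_value:
  "policy_value2 n t x pol = (\<Sum>h2\<in>hist t. Min (range (action_value n t x pol h2)))"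
  by (simp add: policy_value2_def Min_belief_value2_eq_Min_action_value)

lemma belief_value1_mix_policy:
  assumes "pol1 \<in> policies1" "pol2 \<in> policies1" "0 \<le> \<theta>" "\<theta> \<le> 1"
  shows "belief_value1 n k b (mix_policy k \<theta> pol1 pol2) \<kappa>
       = \<theta> * belief_value1 n k b pol1 \<kappa> + (1 - \<theta>) * belief_value1 n k b pol2 \<kappa>"
proof -
  have "belief_value1 n k b (mix_policy k \<theta> pol1 pol2) \<kappa> = (\<Sum>(s, h1)\<in>UNIV \<times> hist k.
      \<theta> * (b (s, h1) * A1 p r g pol1 \<kappa> n k s h1 []) + (1 - \<theta>) * (b (s, h1) * A1 p r g pol2 \<kappa> n k s h1 []))"
    unfolding belief_value1_def
    by (rule sum.cong) (auto simp: A1_mix_policy[OF assms] hist_def algebra_simps)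
  then show ?thesis
    by (simp add: belief_value1_def sum.distrib sum_distrib_left case_prod_beta)
qed

lemma action_value_mix_policy:
  assumes "pol1 \<in> policies1" "pol2 \<in> policies1" "0 \<le> \<theta>" "\<theta> \<le> 1"
  shows "\<theta> * action_value n t x pol1 h2 a2 + (1 - \<theta>) * action_value n t x pol2 h2 a2
       \<le> action_value n t x (mix_policy (Suc t) \<theta> pol1 pol2) h2 a2"
proof -
  define M where "M = (\<lambda>pol z2. Min (range (belief_value1 n (Suc t) (next_belief x h2 a2 z2) pol)))"
  have "\<theta> * M pol1 z2 + (1 - \<theta>) * M pol2 z2 \<le> M (mix_policy (Suc t) \<theta> pol1 pol2) z2" for z2
  proof -
    obtain \<kappa> where \<kappa>: "M (mix_policy (Suc t) \<theta> pol1 pol2) z2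
        = belief_value1 n (Suc t) (next_belief x h2 a2 z2) (mix_policy (Suc t) \<theta> pol1 pol2) \<kappa>"
      unfolding M_def using Min_range_attained[OF finite_range_belief_value1] by blast
    have "\<theta> * M pol1 z2 + (1 - \<theta>) * M pol2 z2
        \<le> \<theta> * belief_value1 n (Suc t) (next_belief x h2 a2 z2) pol1 \<kappa>
          + (1 - \<theta>) * belief_value1 n (Suc t) (next_belief x h2 a2 z2) pol2 \<kappa>"
      unfolding M_def using assms
      by (intro add_mono mult_left_mono Min_le finite_range_belief_value1) auto
    also have "\<dots> = M (mix_policy (Suc t) \<theta> pol1 pol2) z2"
      unfolding \<kappa> by (rule belief_value1_mix_policy[OF assms, symmetric])
    finally show ?thesis .
  qed
  then have "g * (\<Sum>z2\<in>UNIV. \<theta> * M pol1 z2 + (1 - \<theta>) * M pol2 z2)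
      \<le> g * (\<Sum>z2\<in>UNIV. M (mix_policy (Suc t) \<theta> pol1 pol2) z2)"
    by (intro mult_left_mono g_nonneg sum_mono)
  moreover have "\<theta> * action_value n t x pol1 h2 a2 + (1 - \<theta>) * action_value n t x pol2 h2 a2
      = stage_reward t x h2 a2 + g * (\<Sum>z2\<in>UNIV. \<theta> * M pol1 z2 + (1 - \<theta>) * M pol2 z2)"
    unfolding action_value_def M_def by (simp add: sum.distrib sum_distrib_left sum_subtractf algebra_simps)
  ultimately show ?thesis by (simp add: action_value_def M_def)
qed

lemma policy_value2_le_decision_rule_value:
  assumes V1_max: "\<And>y. (\<forall>w. 0 \<le> y w) \<Longrightarrow> maximum_on (policy_value1 n (Suc t) y) policies1 (V1 p r g n (Suc t) y)"
    and x: "\<forall>w. 0 \<le> x w" and pol: "pol \<in> policies1" and d2: "d2 \<in> decision_rules"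
  shows "policy_value2 n t x pol \<le> rho2 r t x d2 + g * V1 p r g n (Suc t) (tau2 p x d2)"
proof -
  have "policy_value2 n t x pol \<le> (\<Sum>h2\<in>hist t. \<Sum>a2\<in>UNIV. d2 h2 a2 * action_value n t x pol h2 a2)"
    unfolding policy_value2_eq_sum_Min_action_value
    using d2 by (intro sum_mono Min_le_convex_combination) (auto simp: decision_rule_nonneg decision_rule_sum)
  also have "\<dots> = rho2 r t x d2 + g * policy_value1 n (Suc t) (tau2 p x d2) pol"
    using d2 by (simp add: rho2_plus_policy_value1_tau2 decision_rule_nonneg)
  also have "\<dots> \<le> rho2 r t x d2 + g * V1 p r g n (Suc t) (tau2 p x d2)"
    using V1_max[of "tau2 p x d2"] tau2_nonneg[OF x d2] pol
    by (intro add_left_mono mult_left_mono g_nonneg) (auto simp: maximum_on_def)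
  finally show ?thesis .
qed

lemma concave_like_pure_action_values:
  "concave_like_on policies1 (PiE (hist t) (\<lambda>_. UNIV))
     (\<lambda>c pol. \<Sum>h2\<in>hist t. action_value n t x pol h2 (c h2))"
  unfolding concave_like_on_def
proof (intro ballI)
  fix pol1 pol2 :: "('a1, 'z1) policy" and \<theta> :: real
  assume pol12: "pol1 \<in> policies1" "pol2 \<in> policies1" and "\<theta> \<in> {0..1}"
  then have \<theta>: "0 \<le> \<theta>" "\<theta> \<le> 1" by auto
  have "\<theta> * (\<Sum>h2\<in>hist t. action_value n t x pol1 h2 (c h2)) + (1 - \<theta>) * (\<Sum>h2\<in>hist t. action_value n t x pol2 h2 (c h2))
      \<le> (\<Sum>h2\<in>hist t. action_value n t x (mix_policy (Suc t) \<theta> pol1 pol2) h2 (c h2))" for c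
    unfolding sum_distrib_left sum.distrib[symmetric]
    by (intro sum_mono action_value_mix_policy pol12 \<theta>)
  then show "\<exists>pol3\<in>policies1. \<forall>c\<in>PiE (hist t) (\<lambda>_. UNIV).
      \<theta> * (\<Sum>h2\<in>hist t. action_value n t x pol1 h2 (c h2)) + (1 - \<theta>) * (\<Sum>h2\<in>hist t. action_value n t x pol2 h2 (c h2))
      \<le> (\<Sum>h2\<in>hist t. action_value n t x pol3 h2 (c h2))"
    using mix_policy_in_policies1[OF pol12 \<theta>] by blast
qed

lemma policy_value2_attained_by_pure_rule:
  "\<exists>c\<in>PiE (hist t) (\<lambda>_. UNIV). (\<Sum>h2\<in>hist t. action_value n t x pol h2 (c h2)) = policy_value2 n t x pol"
proof -
  have "\<exists>a2. Min (range (action_value n t x pol h2)) = action_value n t x pol h2 a2" for h2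
    by (rule Min_range_attained) simp
  then obtain c where c: "\<And>h2. Min (range (action_value n t x pol h2)) = action_value n t x pol h2 (c h2)"
    by metis
  have "(\<Sum>h2\<in>hist t. action_value n t x pol h2 (restrict c (hist t) h2)) = policy_value2 n t x pol"
    by (simp add: policy_value2_eq_sum_Min_action_value c)
  then show ?thesis by (intro bexI[of _ "restrict c (hist t)"]) auto
qed

text \<open>The minimax lemma, applied to the pure player-2 decision rules \<open>c\<close> of the current stage,
  yields a mixture of them, i.e. a decision rule, that is good against every player-1 policy.\<close>
lemma decision_rule_bounding_action_values:
  assumes "\<And>pol. pol \<in> policies1 \<Longrightarrow> policy_value2 n t x pol \<le> v"
  obtains d2 where "d2 \<in> decision_rules"
    "\<And>pol. pol \<in> policies1 \<Longrightarrow> (\<Sum>h2\<in>hist t. \<Sum>a2\<in>UNIV. d2 h2 a2 * action_value n t x pol h2 a2) \<le> v"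
proof -
  define C :: "(('a2 \<times> 'z2) list \<Rightarrow> 'a2) set" where "C = PiE (hist t) (\<lambda>_. UNIV)"
  define f where "f = (\<lambda>c pol. \<Sum>h2\<in>hist t. action_value n t x pol h2 (c h2))"
  have "finite C" "C \<noteq> {}" by (auto simp: C_def finite_PiE PiE_eq_empty_iff)
  moreover have "\<forall>pol\<in>policies1. \<exists>c\<in>C. f c pol \<le> v"
  proof
    fix pol :: "('a1, 'z1) policy" assume "pol \<in> policies1"
    then show "\<exists>c\<in>C. f c pol \<le> v"
      using policy_value2_attained_by_pure_rule[of t n x pol] assms[of pol]
      unfolding C_def f_def by (metis order.refl)
  qed
  ultimately obtain q where q: "\<forall>c\<in>C. 0 \<le> q c" "sum q C = 1"
      "\<forall>pol\<in>policies1. (\<Sum>c\<in>C. q c * f c pol) \<le> v"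
    using concave_like_minimax[of C policies1 f v] concave_like_pure_action_values
    unfolding C_def f_def by blast
  show ?thesis
  proof (rule that)
    show "mixed_rule C q \<in> decision_rules" using \<open>finite C\<close> q(1,2) by (rule mixed_rule_in_decision_rules)
    fix pol :: "('a1, 'z1) policy" assume "pol \<in> policies1"
    have "(\<Sum>h2\<in>hist t. \<Sum>a2\<in>UNIV. mixed_rule C q h2 a2 * action_value n t x pol h2 a2)
        = (\<Sum>c\<in>C. q c * f c pol)"
      using \<open>finite C\<close> by (simp add: sum_mixed_rule f_def sum_distrib_left sum.swap[of _ C])
    with q(3) \<open>pol \<in> policies1\<close>
    show "(\<Sum>h2\<in>hist t. \<Sum>a2\<in>UNIV. mixed_rule C q h2 a2 * action_value n t x pol h2 a2) \<le> v"
      by simp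
  qed
qed

lemma maximum_on_policy_value2_step:
  assumes V1_max: "\<And>y. (\<forall>w. 0 \<le> y w) \<Longrightarrow> maximum_on (policy_value1 n (Suc t) y) policies1 (V1 p r g n (Suc t) y)"
    and x: "\<forall>w. 0 \<le> x w"
  shows "maximum_on (policy_value2 n t x) policies1 (V2 n t x)"
proof -
  define G where "G = (\<lambda>d2. rho2 r t x d2 + g * V1 p r g n (Suc t) (tau2 p x d2))"
  obtain pol where pol: "pol \<in> policies1"
    and pol_max: "\<And>pol'. pol' \<in> policies1 \<Longrightarrow> policy_value2 n t x pol' \<le> policy_value2 n t x pol"
    using policies1_attains_max[OF continuous_on_policy_value2] by blast
  obtain d2 where d2: "d2 \<in> decision_rules" and d2_good: "\<And>pol'. pol' \<in> policies1 \<Longrightarrow>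
      (\<Sum>h2\<in>hist t. \<Sum>a2\<in>UNIV. d2 h2 a2 * action_value n t x pol' h2 a2) \<le> policy_value2 n t x pol"
    using decision_rule_bounding_action_values[OF pol_max] by blast
  obtain pol' where "pol' \<in> policies1"
    and pol': "policy_value1 n (Suc t) (tau2 p x d2) pol' = V1 p r g n (Suc t) (tau2 p x d2)"
    using V1_max[of "tau2 p x d2"] tau2_nonneg[OF x d2] by (auto simp: maximum_on_def)
  have "G d2 = (\<Sum>h2\<in>hist t. \<Sum>a2\<in>UNIV. d2 h2 a2 * action_value n t x pol' h2 a2)"
    using d2 by (simp add: G_def pol'[symmetric] rho2_plus_policy_value1_tau2 decision_rule_nonneg)
  also have "\<dots> \<le> policy_value2 n t x pol" by (rule d2_good) fact
  finally have "G d2 \<le> policy_value2 n t x pol" .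
  moreover have "policy_value2 n t x pol \<le> G d2'" if "d2' \<in> decision_rules" for d2'
    unfolding G_def by (rule policy_value2_le_decision_rule_value[OF V1_max x pol that])
  ultimately have "V2 n t x = policy_value2 n t x pol"
    unfolding V2_def G_def[symmetric] using d2 by (intro cInf_eq_minimum) (auto intro!: antisym)
  then show ?thesis using pol pol_max by (auto simp: maximum_on_def)
qed

lemma maximum_on_policy_value1_Suc:
  assumes V2_max: "\<And>y. (\<forall>w. 0 \<le> y w) \<Longrightarrow> maximum_on (policy_value2 n t y) policies1 (V2 n t y)"
    and x: "\<forall>w. 0 \<le> x w"
  shows "maximum_on (policy_value1 (Suc n) t x) policies1 (V1 p r g (Suc n) t x)"
proof -
  obtain pol where pol: "pol \<in> policies1"
    and pol_max: "\<And>pol'. pol' \<in> policies1 \<Longrightarrow> policy_value1 (Suc n) t x pol' \<le> policy_value1 (Suc n) t x pol"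
    using policies1_attains_max[OF continuous_on_policy_value1] by blast
  have "V2 n t (tau1 x d1) \<le> policy_value1 (Suc n) t x pol" if d1: "d1 \<in> decision_rules" for d1
  proof -
    obtain pol' where "pol' \<in> policies1" and pol': "policy_value2 n t (tau1 x d1) pol' = V2 n t (tau1 x d1)"
      using V2_max[of "tau1 x d1"] tau1_nonneg[OF x d1] by (auto simp: maximum_on_def)
    then have "pol'(t := d1) \<in> policies1" using d1 by (simp add: policies1_def)
    have "V2 n t (tau1 x d1) = policy_value2 n t (tau1 x d1) (pol'(t := d1))"
      unfolding pol'[symmetric] by (rule policy_value2_policy_cong) simp
    also have "\<dots> = policy_value1 (Suc n) t x (pol'(t := d1))" by (simp add: policy_value1_Suc)
    also have "\<dots> \<le> policy_value1 (Suc n) t x pol" by (rule pol_max) fact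
    finally show ?thesis .
  qed
  moreover have "pol t \<in> decision_rules" using pol by (simp add: policies1_def)
  moreover have "policy_value1 (Suc n) t x pol \<le> V2 n t (tau1 x (pol t))"
    using V2_max[of "tau1 x (pol t)"] tau1_nonneg[OF x \<open>pol t \<in> decision_rules\<close>] pol
    by (auto simp: maximum_on_def policy_value1_Suc)
  ultimately have "V1 p r g (Suc n) t x = policy_value1 (Suc n) t x pol"
    unfolding V1_Suc_eq_SUP_V2 by (intro cSup_eq_maximum) (auto intro!: antisym)
  then show ?thesis using pol pol_max by (auto simp: maximum_on_def)
qed

lemma maximum_on_policy_value1:
  "(\<forall>w. 0 \<le> x w) \<Longrightarrow> maximum_on (policy_value1 n t x) policies1 (V1 p r g n t x)"
proof (induction n arbitrary: t x)
  case 0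
  then show ?case using policies1_nonempty by (auto simp: maximum_on_def policy_value1_def belief_value1_def)
next
  case (Suc n)
  then show ?case by (intro maximum_on_policy_value1_Suc maximum_on_policy_value2_step)
qed

lemma maximum_on_policy_value2:
  "(\<forall>w. 0 \<le> x w) \<Longrightarrow> maximum_on (policy_value2 n t x) policies1 (V2 n t x)"
  by (intro maximum_on_policy_value2_step maximum_on_policy_value1)

end

theorem theorem4p1:
  fixes p :: "'s::finite \<Rightarrow> 'a1::finite \<Rightarrow> 'a2::finite \<Rightarrow> 's \<times> 'z1::finite \<times> 'z2::finite \<Rightarrow> real"
    and r :: "'s \<Rightarrow> 'a1 \<Rightarrow> 'a2 \<Rightarrow> real"
    and g :: real and l t :: nat
  assumes p_nonneg: "\<forall>s a1 a2 ob. 0 \<le> p s a1 a2 ob"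
    and p_sum: "\<forall>s a1 a2. (\<Sum>ob\<in>UNIV. p s a1 a2 ob) = 1"
    and g_ge: "0 \<le> g" and g_lt: "g < 1"
    and t_lt: "t < l"
  shows "(\<forall>x\<in>(occ1 t :: ('s \<times> ('a1 \<times> 'z1) list \<times> ('a2 \<times> 'z2) list \<Rightarrow> real) set).
            (\<exists>G\<in>Gamma1_1 p r g l t. Val1 t G x = vseq1 p r g l t x)
          \<and> (\<forall>G\<in>Gamma1_1 p r g l t. Val1 t G x \<le> vseq1 p r g l t x))
       \<and> (\<forall>x\<in>(occ2 t :: ('s \<times> ('a1 \<times> 'z1) list \<times> ('a2 \<times> 'z2) list \<times> 'a1 \<Rightarrow> real) set).
            (\<exists>G\<in>Gamma1_2 p r g l t. Val2 t G x = vseq2 p r g l t x)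
          \<and> (\<forall>G\<in>Gamma1_2 p r g l t. Val2 t G x \<le> vseq2 p r g l t x))"
proof -
  interpret posg p r g using p_nonneg g_ge by unfold_locales auto
  have "maximum_on (\<lambda>G. Val1 t G x) (Gamma1_1 p r g l t) (vseq1 p r g l t x)" if "x \<in> occ1 t" for x
    using maximum_on_policy_value1[of x "l - t" t] that
    by (simp add: Gamma1_1_def maximum_on_image Val1_Gamma2_1 vseq1_def occ1_def)
  moreover have "maximum_on (\<lambda>G. Val2 t G x) (Gamma1_2 p r g l t) (vseq2 p r g l t x)" if "x \<in> occ2 t" for x
    using maximum_on_policy_value2[of x "l - Suc t" t] that
    by (simp add: Gamma1_2_def maximum_on_image Val2_Gamma2_2 vseq2_def V2_def occ2_def)
  ultimately show ?thesis by (simp add: maximum_on_def)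
qed

end
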